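(* Let $m\ge 2$, $\widetilde m\ge 1$, and let $\ell_1=\lfloor (m+\widetilde m)/2\rfloor$, $\ell_2=\lceil (m+\widetilde m)/2\rceil$. Let $\mathcal{T}^1=(t^1_i)_{i\in\mathbb{Z}}$ be strictly increasing and let $\mathcal{T}^0=(t^0_i)_{i\in\mathbb{Z}}$ with $t^0_i=t^1_{2i}$. Set $V_0=S_{m,\mathcal{T}^0}$, $V_1=S_{m,\mathcal{T}^1}$. For each $k$ let $$\Xi_k=\big(t^0_{k+1-\ell_1},t^0_{k+2-\ell_1},\dots,t^0_k,\;t^1_{2k+1},\;t^0_{k+1},\dots,t^0_{k+\ell_2}\big)$$ (a strictly increasing sequence of $m+\widetilde m+1$ knots), let $N^{\Xi_k}_{m+\widetilde m}$ be the B-spline of order $m+\widetilde m$ with knots $\Xi_k$, and define the wavelet $\psi_k=\alpha_k\,\frac{d^{\widetilde m}}{dt^{\widetilde m}}N^{\Xi_k}_{m+\widetilde m}$ with a constant $\alpha_k\neq 0$. Then: (1) For each $k$ there are $\sigma_k\in V_0$ and $\gamma_k\in\mathbb{R}$, $\gamma_k\ne 0$, such that $\psi_k(t)=\sigma_k(t)+\gamma_k\,(t-t^1_{2k+1})_+^{m-1}$ for all $t\in\mathbb{R}$. (2) Let $s_1\in V_1$ be compactly supported and suppose $s_1=s_0+\sum_k d_k\psi_k$ (finite sum) with $s_0\in V_0$ and $d_k\in\mathbb{R}$. Write $s_1(t)=\sum_{i\in\mathbb{Z}}a_i\,(t-t^1_i)_+^{m-1}$ (truncated power representation). Then for every $k$,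 $$d_k=\frac{a_{2k+1}}{\gamma_k},$$ where $a_{2k+1}$ equals $\frac{1}{(m-1)!}$ times the jump of $s_1^{(m-1)}$ at $t^1_{2k+1}$ and $\gamma_k$ equals $\frac{1}{(m-1)!}$ times the jump of $\psi_k^{(m-1)}$ at $t^1_{2k+1}$.
   Context: For a strictly increasing knot sequence $\mathcal{T}=(t_i)_{i\in\mathbb{Z}}$ and an integer $m\ge 2$, the spline space of order $m$ is $S_{m,\mathcal{T}}=\{f\in C^{m-2}(\mathbb{R}): f|_{(t_i,t_{i+1}]}\text{ is a polynomial of degree}<m \text{ for all } i\}$. For a finite strictly increasing knot sequence $\xi_0<\xi_1<\dots<\xi_{r}$, the B-spline of order $r$ with these knots is the (up to normalization unique) nonzero piecewise polynomial of degree $<r$ with breakpoints $\xi_i$, in $C^{r-2}(\mathbb{R})$, supported on $[\xi_0,\xi_r]$ (normalized, e.g., so that B-splines form a partition of unity; the normalization is absorbed in $\alpha_k$). The truncated power is $(t)_+^{j}=\chi_{(0,\infty)}(t)\,t^j$. The jump of a piecewise constant function $g$ at $\tau$ means $g(\tau+)-g(\tau-)$. *)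

theory Defs
  imports "HOL-Analysis.Analysis" "HOL-Computational_Algebra.Polynomial"
begin

definition C_k :: "nat \<Rightarrow> (real \<Rightarrow> real) \<Rightarrow> bool" where
  "C_k n f \<longleftrightarrow> (\<forall>j<n. \<forall>x. ((deriv ^^ j) f) differentiable (at x))
                 \<and> continuous_on UNIV ((deriv ^^ n) f)"

definition poly_on :: "nat \<Rightarrow> real set \<Rightarrow> (real \<Rightarrow> real) \<Rightarrow> bool" where
  "poly_on m S f \<longleftrightarrow> (\<exists>p :: real poly. degree p < m \<and> (\<forall>x\<in>S. f x = poly p x))"

definition spline_space :: "nat \<Rightarrow> (int \<Rightarrow> real) \<Rightarrow> (real \<Rightarrow> real) set" where
  "spline_space m T = {f. C_k (m - 2) f \<and> (\<forall>i. poly_on m {T i<..T (i+1)} f)}"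

definition is_bspline :: "nat \<Rightarrow> (nat \<Rightarrow> real) \<Rightarrow> (real \<Rightarrow> real) \<Rightarrow> bool" where
  "is_bspline r xi N \<longleftrightarrow> (\<exists>x. N x \<noteq> 0) \<and> C_k (r - 2) N
     \<and> (\<forall>i<r. poly_on r {xi i<..xi (Suc i)} N)
     \<and> (\<forall>x. x < xi 0 \<or> xi r < x \<longrightarrow> N x = 0)"

definition tpow :: "real \<Rightarrow> nat \<Rightarrow> real" where
  "tpow t j = (if 0 < t then t ^ j else 0)"

definition jump :: "(real \<Rightarrow> real) \<Rightarrow> real \<Rightarrow> real" where
  "jump g tau = Lim (at_right tau) g - Lim (at_left tau) g"

text \<open>Knot sequence Xi_k (indices 0..m+mt), with t^0_i = T1 (2 i).\<close>
definition Xi :: "nat \<Rightarrow> nat \<Rightarrow> (int \<Rightarrow> real) \<Rightarrow> int \<Rightarrow> nat \<Rightarrow> real" where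
  "Xi m mt T1 k j = (let l1 = int ((m + mt) div 2) in
      if int j < l1 then T1 (2 * (k + 1 - l1 + int j))
      else if int j = l1 then T1 (2 * k + 1)
      else T1 (2 * (k + int j - l1)))"

definition jump_coeff :: "nat \<Rightarrow> (real \<Rightarrow> real) \<Rightarrow> real \<Rightarrow> real" where
  "jump_coeff m f tau = jump ((deriv ^^ (m - 1)) f) tau / fact (m - 1)"

end

theory Submission
  imports Defs
begin

text \<open>A B-spline of order r = m + mt is a combination of the r + 1 truncated powers
  (t - xi i)_+^(r-1) at its knots whose ordinary polynomial parts cancel, and linear independence
  of the powers (x - xi i)^(r-1) at r distinct knots forces every coefficient to be nonzero.
  Differentiating mt times yields psi k as a combination of truncated powers of degree m - 1 at the
  knots Xi k; all of them lie on the coarse grid except the middle one, T1 (2 k + 1), which gives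
  the splitting psi k = sigma k + gamma k (t - T1 (2 k + 1))_+^(m-1) with sigma k in V0.
  The jump of the (m-1)-st derivative at T1 (2 k + 1) sees only the truncated power attached to
  that knot: in s1 = s0 + sum d j psi j this is d k gamma k, while in the truncated-power
  expansion of s1 it is a (2 k + 1).\<close>

section \<open>Truncated powers and local polynomials\<close>

lemma tpow_eq_power_max: "p \<ge> 1 \<Longrightarrow> tpow s p = (max s 0) ^ p"
  by (simp add: tpow_def max_def)

lemma continuous_on_tpow: "p \<ge> 1 \<Longrightarrow> continuous_on UNIV (\<lambda>t. tpow (t - a) p)"
  unfolding tpow_eq_power_max
  by (intro continuous_on_power continuous_on_max continuous_on_diff continuous_intros)

lemma has_real_derivative_tpow:
  assumes "p \<ge> 2"
  shows "((\<lambda>t. tpow (t - a) p) has_real_derivative (of_nat p * tpow (t - a) (p - 1))) (at t)"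
proof -
  consider "a < t" | "t < a" | "t = a" by linarith
  then show ?thesis
  proof cases
    case 1
    have "((\<lambda>t. (t - a) ^ p) has_real_derivative (of_nat p * (t - a) ^ (p - 1))) (at t)"
      by (auto intro!: derivative_eq_intros)
    then have "((\<lambda>t. tpow (t - a) p) has_real_derivative (of_nat p * (t - a) ^ (p - 1))) (at t)"
      by (rule has_field_derivative_transform_within_open[where S = "{a<..}"])
        (use 1 in \<open>auto simp: tpow_def\<close>)
    then show ?thesis using 1 by (simp add: tpow_def)
  next
    case 2
    have "((\<lambda>t. 0) has_real_derivative 0) (at t)" by simp
    then have "((\<lambda>t. tpow (t - a) p) has_real_derivative 0) (at t)"
      by (rule has_field_derivative_transform_within_open[where S = "{..<a}"])
        (use 2 in \<open>auto simp: tpow_def\<close>)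
    then show ?thesis using 2 by (simp add: tpow_def)
  next
    case 3
    have bound: "\<bar>tpow (y - a) p / (y - a)\<bar> \<le> \<bar>y - a\<bar> ^ (p - 1)" for y
    proof (cases "a < y")
      case True
      obtain q where "p = Suc q" using assms by (cases p) auto
      then show ?thesis using True by (simp add: tpow_def)
    qed (simp add: tpow_def)
    have "((\<lambda>y. \<bar>y - a\<bar> ^ (p - 1)) \<longlongrightarrow> 0) (at a)"
      using assms by (auto intro!: tendsto_eq_intros simp: power_0_left)
    then have "((\<lambda>y. tpow (y - a) p / (y - a)) \<longlongrightarrow> 0) (at a)"
      by (rule Lim_null_comparison[rotated]) (use bound in simp)
    then show ?thesis
      using 3 by (simp add: has_field_derivative_iff tpow_def)
  qed
qed

definition tpow_sum :: "'i set \<Rightarrow> ('i \<Rightarrow> real) \<Rightarrow> ('i \<Rightarrow> real) \<Rightarrow> nat \<Rightarrow> real \<Rightarrow> real" where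
  "tpow_sum S c xi p t = (\<Sum>i\<in>S. c i * tpow (t - xi i) p)"

lemma has_real_derivative_tpow_sum:
  assumes "p \<ge> 2"
  shows "(tpow_sum S c xi p has_real_derivative tpow_sum S (\<lambda>i. of_nat p * c i) xi (p - 1) t) (at t)"
proof -
  have "((\<lambda>t. \<Sum>i\<in>S. c i * tpow (t - xi i) p) has_real_derivative
      (\<Sum>i\<in>S. c i * (of_nat p * tpow (t - xi i) (p - 1)))) (at t)"
    using assms by (intro DERIV_sum DERIV_cmult has_real_derivative_tpow)
  then show ?thesis by (simp add: tpow_sum_def[abs_def] mult_ac)
qed

lemma deriv_tpow_sum:
  "p \<ge> 2 \<Longrightarrow> deriv (tpow_sum S c xi p) = tpow_sum S (\<lambda>i. of_nat p * c i) xi (p - 1)"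
  using has_real_derivative_tpow_sum DERIV_imp_deriv by blast

lemma higher_deriv_tpow_sum:
  "j < p \<Longrightarrow> (deriv ^^ j) (tpow_sum S c xi p) = tpow_sum S (\<lambda>i. fact p / fact (p - j) * c i) xi (p - j)"
proof (induction j)
  case 0
  then show ?case by (simp add: tpow_sum_def[abs_def])
next
  case (Suc j)
  have step: "of_nat (p - j) * (fact p / fact (p - j)) = (fact p / fact (p - Suc j) :: real)"
    using Suc.prems fact_reduce[of "p - j", where 'a = real] by (simp add: Suc_diff_Suc)
  have "(deriv ^^ Suc j) (tpow_sum S c xi p) = deriv (tpow_sum S (\<lambda>i. fact p / fact (p - j) * c i) xi (p - j))"
    using Suc by simp
  also have "\<dots> = tpow_sum S (\<lambda>i. of_nat (p - j) * (fact p / fact (p - j) * c i)) xi (p - j - 1)"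
    using Suc.prems by (intro deriv_tpow_sum) auto
  also have "p - j - 1 = p - Suc j" by simp
  finally show ?case unfolding mult.assoc[symmetric] step .
qed

lemma continuous_on_tpow_sum: "p \<ge> 1 \<Longrightarrow> continuous_on UNIV (tpow_sum S c xi p)"
  unfolding tpow_sum_def[abs_def]
  by (intro continuous_on_sum continuous_on_mult continuous_on_const continuous_on_tpow)

lemma C_k_tpow_sum:
  assumes "p \<ge> 1"
  shows "C_k (p - 1) (tpow_sum S c xi p)"
  unfolding C_k_def
proof safe
  fix j x assume j: "j < p - 1"
  have "tpow_sum S (\<lambda>i. fact p / fact (p - j) * c i) xi (p - j) differentiable at x"
    using has_real_derivative_tpow_sum[of "p - j"] j real_differentiable_def by fastforce
  then show "(deriv ^^ j) (tpow_sum S c xi p) differentiable at x"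
    using j by (subst higher_deriv_tpow_sum) auto
next
  have "(deriv ^^ (p - 1)) (tpow_sum S c xi p) = tpow_sum S (\<lambda>i. fact p / fact (p - (p - 1)) * c i) xi 1"
    using assms by (subst higher_deriv_tpow_sum) auto
  then show "continuous_on UNIV ((deriv ^^ (p - 1)) (tpow_sum S c xi p))"
    by (simp add: continuous_on_tpow_sum)
qed

lemma poly_on_subset: "poly_on m S f \<Longrightarrow> T \<subseteq> S \<Longrightarrow> poly_on m T f"
  by (auto simp: poly_on_def)

lemma poly_on_add:
  assumes "poly_on m S f" "poly_on m S g"
  shows "poly_on m S (\<lambda>t. f t + g t)"
proof -
  obtain P Q where "degree P < m" "degree Q < m" "\<forall>t\<in>S. f t = poly P t" "\<forall>t\<in>S. g t = poly Q t"
    using assms by (auto simp: poly_on_def)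
  then show ?thesis
    unfolding poly_on_def by (intro exI[of _ "P + Q"]) (auto intro: le_less_trans[OF degree_add_le_max])
qed

lemma poly_on_cmult: "poly_on m S f \<Longrightarrow> poly_on m S (\<lambda>t. c * f t)"
  unfolding poly_on_def by (metis degree_smult_le le_less_trans poly_smult)

lemma poly_on_sum:
  assumes "0 < m" "\<And>i. i \<in> I \<Longrightarrow> poly_on m S (f i)"
  shows "poly_on m S (\<lambda>t. \<Sum>i\<in>I. f i t)"
  using assms(2)
proof (induction I rule: infinite_finite_induct)
  case (insert i I)
  then show ?case by (simp add: poly_on_add)
qed (use assms(1) in \<open>auto simp: poly_on_def intro!: exI[of _ 0]\<close>)

lemma poly_on_tpow:
  assumes "S \<subseteq> {..x} \<or> S \<subseteq> {x<..}"
  shows "poly_on (Suc p) S (\<lambda>t. tpow (t - x) p)"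
proof (cases "S \<subseteq> {x<..}")
  case True
  then have "\<forall>t\<in>S. tpow (t - x) p = poly ([:-x, 1:] ^ p) t"
    by (auto simp: tpow_def poly_power)
  then show ?thesis
    unfolding poly_on_def by (intro exI[of _ "[:-x, 1:] ^ p"]) (simp add: degree_linear_power)
next
  case False
  then have "\<forall>t\<in>S. tpow (t - x) p = poly 0 t"
    using assms by (auto simp: tpow_def)
  then show ?thesis unfolding poly_on_def by (intro exI[of _ 0]) auto
qed

lemma tpow_sum_in_spline_space:
  assumes "m \<ge> 2" "finite S" "strict_mono T" "xi ` S \<subseteq> range T"
  shows "tpow_sum S c xi (m - 1) \<in> spline_space m T"
  unfolding spline_space_def
proof safe
  show "C_k (m - 2) (tpow_sum S c xi (m - 1))"
    using C_k_tpow_sum[of "m - 1" S c xi] assms(1) by (simp add: diff_diff_add numeral_2_eq_2)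
next
  fix j
  have "poly_on (Suc (m - 1)) {T j<..T (j + 1)} (\<lambda>t. tpow (t - xi i) (m - 1))" if "i \<in> S" for i
  proof (rule poly_on_tpow)
    obtain n where n: "xi i = T n" using assms(4) \<open>i \<in> S\<close> by auto
    show "{T j<..T (j + 1)} \<subseteq> {..xi i} \<or> {T j<..T (j + 1)} \<subseteq> {xi i<..}"
    proof (cases "n \<le> j")
      case True
      then have "xi i \<le> T j" using assms(3) by (simp add: n strict_mono_less_eq)
      then show ?thesis by auto
    next
      case False
      then have "T (j + 1) \<le> xi i" using assms(3) by (simp add: n strict_mono_less_eq)
      then show ?thesis by auto
    qed
  qed
  then show "poly_on m {T j<..T (j + 1)} (tpow_sum S c xi (m - 1))"
    using assms(1) unfolding tpow_sum_def by (auto intro!: poly_on_sum poly_on_cmult)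
qed

lemma higher_pderiv_diff: "(pderiv ^^ n) (p - q) = (pderiv ^^ n) p - (pderiv ^^ n) (q :: real poly)"
  by (induction n) (simp_all add: pderiv_diff)

lemma higher_pderiv_linear_power: "(pderiv ^^ n) ([:-x, 1:] ^ n) = [:fact n :: real:]"
proof -
  have "degree ((pderiv ^^ n) ([:-x, 1:] ^ n)) = 0"
    by (simp add: degree_higher_pderiv degree_linear_power)
  then have "(pderiv ^^ n) ([:-x, 1:] ^ n) = [:coeff ((pderiv ^^ n) ([:-x, 1:] ^ n)) 0:]"
    by (rule degree_0_id[symmetric])
  also have "coeff ((pderiv ^^ n) ([:-x, 1:] ^ n)) 0 = fact n"
    by (simp add: coeff_higher_pderiv coeff_linear_power pochhammer_fact)
  finally show ?thesis .
qed

lemma higher_pderiv_pcompose_shift: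
  "(pderiv ^^ j) (pcompose D [:a, 1:]) = pcompose ((pderiv ^^ j) D) [:a, 1 :: real:]"
  by (induction j) (auto simp: pderiv_pcompose pderiv_pCons)

text \<open>Shifting a to 0, the vanishing derivatives kill all coefficients below n.\<close>
lemma higher_pderivs_vanish_imp_linear_power:
  fixes D :: "real poly"
  assumes "degree D \<le> n" "\<forall>j<n. poly ((pderiv ^^ j) D) a = 0"
  shows "\<exists>c. D = smult c ([:-a, 1:] ^ n)"
proof -
  define E where "E = pcompose D [:a, 1:]"
  have "coeff E j = 0" if "j < n" for j
  proof -
    have "poly ((pderiv ^^ j) E) 0 = 0"
      using assms(2) that by (simp add: E_def higher_pderiv_pcompose_shift poly_pcompose)
    then show ?thesis by (simp add: poly_0_coeff_0 coeff_higher_pderiv pochhammer_fact[symmetric])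
  qed
  moreover have "degree E \<le> n" using assms(1) by (simp add: E_def degree_pcompose)
  ultimately have E: "E = monom (coeff E n) n"
    by (intro poly_eqI) (metis coeff_monom coeff_eq_0 le_less_trans linorder_neqE_nat)
  have "poly D t = poly (smult (coeff E n) ([:-a, 1:] ^ n)) t" for t
  proof -
    have "poly D t = poly E (t - a)" by (simp add: E_def poly_pcompose)
    also have "\<dots> = coeff E n * (t - a) ^ n" by (subst E) (simp add: poly_monom)
    finally show ?thesis by (simp add: poly_power)
  qed
  then show ?thesis using poly_eq_poly_eq_iff by blast
qed

lemma linear_power_pderiv_shift:
  fixes a b :: real
  shows "[:-a, 1:] * pderiv ([:-b, 1:] ^ Suc p) - smult (of_nat (Suc p)) ([:-b, 1:] ^ Suc p)
    = smult (of_nat (Suc p) * (b - a)) ([:-b, 1:] ^ p)"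
proof (rule poly_ext)
  fix t
  have "pderiv ([:-b, 1:] ^ Suc p) = smult (of_nat (Suc p)) ([:-b, 1:] ^ p)"
    by (simp add: pderiv_power_Suc pderiv_pCons del: power_Suc)
  then show "poly ([:-a, 1:] * pderiv ([:-b, 1:] ^ Suc p) - smult (of_nat (Suc p)) ([:-b, 1:] ^ Suc p)) t
    = poly (smult (of_nat (Suc p) * (b - a)) ([:-b, 1:] ^ p)) t"
    by (simp add: poly_power algebra_simps del: of_nat_Suc)
qed

text \<open>The operator Q \<mapsto> (x - xi s) Q' - (p + 1) Q lowers each power (x - xi i)^(p+1) to a
  multiple of (x - xi i)^p and annihilates the s-th one, which drives the induction on p.\<close>
lemma linear_powers_independent:
  fixes xi :: "'i \<Rightarrow> real"
  assumes "finite S" "card S \<le> Suc p" "inj_on xi S"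
    "(\<Sum>i\<in>S. smult (c i) ([:-xi i, 1:] ^ p)) = 0"
  shows "\<forall>i\<in>S. c i = 0"
  using assms
proof (induction p arbitrary: S c)
  case 0
  show ?case
  proof
    fix i assume "i \<in> S"
    then have "S = {i}" using 0(1,2) card_le_Suc0_iff_eq by blast
    then show "c i = 0" using 0(4) by simp
  qed
next
  case (Suc p)
  show ?case
  proof (cases "S = {}")
    case False
    then obtain s where s: "s \<in> S" by blast
    define L where "L Q = [:-xi s, 1:] * pderiv Q - smult (of_nat (Suc p)) Q" for Q
    have L_add: "L (Q + R) = L Q + L R" for Q R
      by (simp add: L_def pderiv_add distrib_left smult_add_right)
    have L_smult: "L (smult x Q) = smult x (L Q)" for x Q
      by (simp add: L_def pderiv_smult smult_diff_right mult_smult_right smult_smult mult.commute)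
    have L_zero: "L 0 = 0" by (simp add: L_def)
    have L_power: "L ([:-xi i, 1:] ^ Suc p) = smult (of_nat (Suc p) * (xi i - xi s)) ([:-xi i, 1:] ^ p)" for i
      unfolding L_def by (rule linear_power_pderiv_shift)
    have "L (\<Sum>i\<in>S. smult (c i) ([:-xi i, 1:] ^ Suc p))
        = (\<Sum>i\<in>S. smult (c i) (L ([:-xi i, 1:] ^ Suc p)))"
      by (induction S rule: infinite_finite_induct) (simp_all add: L_zero L_add L_smult del: power_Suc)
    then have "(\<Sum>i\<in>S. smult (c i * (of_nat (Suc p) * (xi i - xi s))) ([:-xi i, 1:] ^ p)) = 0"
      using Suc.prems(4) by (simp add: L_zero L_power del: power_Suc)
    then have "(\<Sum>i\<in>S - {s}. smult (c i * (of_nat (Suc p) * (xi i - xi s))) ([:-xi i, 1:] ^ p)) = 0"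
      using Suc.prems(1) s by (simp add: sum.remove)
    then have "\<forall>i\<in>S - {s}. c i * (of_nat (Suc p) * (xi i - xi s)) = 0"
      using Suc.prems(1-3) s by (intro Suc.IH) (auto simp: card_Diff_singleton inj_on_diff)
    moreover have "xi i \<noteq> xi s" if "i \<in> S - {s}" for i
      using Suc.prems(3) s that by (auto dest: inj_onD)
    ultimately have others: "\<forall>i\<in>S - {s}. c i = 0" by auto
    then have "smult (c s) ([:-xi s, 1:] ^ Suc p) = 0"
      using Suc.prems(1,4) s by (simp add: sum.remove del: power_Suc)
    then show ?thesis using others by (auto simp del: power_Suc)
  qed simp
qed

section \<open>Jumps of derivatives\<close>

lemma higher_deriv_eq_poly_on_open:
  fixes f :: "real \<Rightarrow> real"
  assumes "open U" "\<forall>t\<in>U. f t = poly P t"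
  shows "\<forall>t\<in>U. (deriv ^^ j) f t = poly ((pderiv ^^ j) P) t"
proof (induction j)
  case 0
  then show ?case using assms by simp
next
  case (Suc j)
  show ?case
  proof
    fix t assume t: "t \<in> U"
    have "((deriv ^^ j) f has_real_derivative poly (pderiv ((pderiv ^^ j) P)) t) (at t)"
      by (rule has_field_derivative_transform_within_open[OF poly_DERIV assms(1) t]) (use Suc in auto)
    then show "(deriv ^^ Suc j) f t = poly ((pderiv ^^ Suc j) P) t"
      by (simp add: DERIV_imp_deriv)
  qed
qed

lemma tendsto_at_right_eq_on_Ioo:
  fixes g h :: "real \<Rightarrow> real"
  assumes "x < b" "\<forall>t\<in>{x<..<b}. g t = h t" "(h \<longlongrightarrow> l) (at_right x)"
  shows "(g \<longlongrightarrow> l) (at_right x)"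
  using assms(3) by (rule Lim_transform_eventually)
    (use assms(1,2) in \<open>auto simp: eventually_at_right[OF assms(1)]\<close>)

lemma tendsto_at_left_eq_on_Ioo:
  fixes g h :: "real \<Rightarrow> real"
  assumes "a < x" "\<forall>t\<in>{a<..<x}. g t = h t" "(h \<longlongrightarrow> l) (at_left x)"
  shows "(g \<longlongrightarrow> l) (at_left x)"
  using assms(3) by (rule Lim_transform_eventually)
    (use assms(1,2) in \<open>auto simp: eventually_at_left[OF assms(1)]\<close>)

lemma jump_higher_deriv_tpow:
  fixes f :: "real \<Rightarrow> real" and P :: "real poly"
  assumes "u < x" "x < v" "\<forall>t\<in>{u<..<v}. f t = poly P t + c * tpow (t - x) n"
  shows "jump ((deriv ^^ n) f) x = c * fact n"
proof -
  define h where "h = poly ((pderiv ^^ n) P)"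
  have "\<forall>t\<in>{x<..<v}. f t = poly (P + smult c ([:-x, 1:] ^ n)) t"
    using assms(1,3) by (auto simp: tpow_def poly_power)
  then have "\<forall>t\<in>{x<..<v}. (deriv ^^ n) f t = poly ((pderiv ^^ n) (P + smult c ([:-x, 1:] ^ n))) t"
    by (rule higher_deriv_eq_poly_on_open[rotated]) simp
  then have "\<forall>t\<in>{x<..<v}. (deriv ^^ n) f t = h t + c * fact n"
    by (simp add: h_def higher_pderiv_add higher_pderiv_smult higher_pderiv_linear_power)
  moreover have "((\<lambda>t. h t + c * fact n) \<longlongrightarrow> h x + c * fact n) (at_right x)"
    unfolding h_def by (intro tendsto_intros)
  ultimately have "((deriv ^^ n) f \<longlongrightarrow> h x + c * fact n) (at_right x)"
    by (rule tendsto_at_right_eq_on_Ioo[OF assms(2)])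
  then have right: "Lim (at_right x) ((deriv ^^ n) f) = h x + c * fact n"
    by (intro tendsto_Lim) simp_all
  have "\<forall>t\<in>{u<..<x}. f t = poly P t"
    using assms(2,3) by (auto simp: tpow_def)
  then have "\<forall>t\<in>{u<..<x}. (deriv ^^ n) f t = h t"
    unfolding h_def by (rule higher_deriv_eq_poly_on_open[rotated]) simp
  moreover have "(h \<longlongrightarrow> h x) (at_left x)"
    unfolding h_def by (intro tendsto_intros)
  ultimately have "((deriv ^^ n) f \<longlongrightarrow> h x) (at_left x)"
    by (rule tendsto_at_left_eq_on_Ioo[OF assms(1)])
  then have left: "Lim (at_left x) ((deriv ^^ n) f) = h x"
    by (intro tendsto_Lim) simp_all
  show ?thesis unfolding jump_def right left by simp
qed

lemma jump_coeff_eqI: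
  assumes "u < x" "x < v" "poly_on m {u<..<v} (\<lambda>t. f t - c * tpow (t - x) (m - 1))"
  shows "jump_coeff m f x = c"
proof -
  obtain P where "\<forall>t\<in>{u<..<v}. f t - c * tpow (t - x) (m - 1) = poly P t"
    using assms(3) unfolding poly_on_def by metis
  then have "\<forall>t\<in>{u<..<v}. f t = poly P t + c * tpow (t - x) (m - 1)"
    by (simp add: diff_eq_eq)
  from jump_higher_deriv_tpow[OF assms(1,2) this] show ?thesis
    by (simp add: jump_coeff_def)
qed

section \<open>B-splines as sums of truncated powers\<close>

lemma C_k_isCont: "C_k n f \<Longrightarrow> j \<le> n \<Longrightarrow> isCont ((deriv ^^ j) f) x"
  unfolding C_k_def
  by (metis continuous_on_eq_continuous_at differentiable_imp_continuous_within le_neq_implies_less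
      open_UNIV UNIV_I)

lemma isCont_eq_from_right:
  fixes g h :: "real \<Rightarrow> real"
  assumes "isCont g x" "isCont h x" "x < b" "\<forall>t\<in>{x<..<b}. g t = h t"
  shows "g x = h x"
proof -
  have "(g \<longlongrightarrow> h x) (at_right x)"
    using assms(2) by (intro tendsto_at_right_eq_on_Ioo[OF assms(3,4)]) (simp add: isCont_def filterlim_at_split)
  moreover have "(g \<longlongrightarrow> g x) (at_right x)" using assms(1) by (simp add: isCont_def filterlim_at_split)
  ultimately show ?thesis using tendsto_unique trivial_limit_at_right_real by blast
qed

lemma isCont_eq_from_left:
  fixes g h :: "real \<Rightarrow> real"
  assumes "isCont g x" "isCont h x" "a < x" "\<forall>t\<in>{a<..<x}. g t = h t"
  shows "g x = h x"
proof -
  have "(g \<longlongrightarrow> h x) (at_left x)"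
    using assms(2) by (intro tendsto_at_left_eq_on_Ioo[OF assms(3,4)]) (simp add: isCont_def filterlim_at_split)
  moreover have "(g \<longlongrightarrow> g x) (at_left x)" using assms(1) by (simp add: isCont_def filterlim_at_split)
  ultimately show ?thesis using tendsto_unique trivial_limit_at_left_real by blast
qed

lemma C_k_knot_jump_linear_power:
  fixes f :: "real \<Rightarrow> real"
  assumes "C_k n f" "a < x" "x < b"
    "\<forall>t\<in>{a<..<x}. f t = poly P t" "\<forall>t\<in>{x<..<b}. f t = poly Q t" "degree (Q - P) \<le> Suc n"
  shows "\<exists>c. Q - P = smult c ([:-x, 1:] ^ Suc n)"
proof (rule higher_pderivs_vanish_imp_linear_power[OF assms(6)], safe)
  fix j assume "j < Suc n"
  then have cont: "isCont ((deriv ^^ j) f) x" using assms(1) by (intro C_k_isCont) auto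
  have "(deriv ^^ j) f x = poly ((pderiv ^^ j) Q) x"
    using higher_deriv_eq_poly_on_open[of "{x<..<b}" f Q j] assms(5)
    by (intro isCont_eq_from_right[OF cont _ assms(3)]) auto
  moreover have "(deriv ^^ j) f x = poly ((pderiv ^^ j) P) x"
    using higher_deriv_eq_poly_on_open[of "{a<..<x}" f P j] assms(4)
    by (intro isCont_eq_from_left[OF cont _ assms(2)]) auto
  ultimately show "poly ((pderiv ^^ j) (Q - P)) x = 0"
    by (simp add: higher_pderiv_diff)
qed

lemma strict_mono_interval_index:
  fixes xi :: "nat \<Rightarrow> real"
  assumes "xi 0 < t"
  shows "\<exists>i\<le>r. xi i < t \<and> (i < r \<longrightarrow> t \<le> xi (Suc i))"
proof (induction r)
  case (Suc r)
  then obtain i where i: "i \<le> r" "xi i < t" "i < r \<longrightarrow> t \<le> xi (Suc i)" by blast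
  show ?case
  proof (cases "i < r \<or> t \<le> xi (Suc r)")
    case True
    then show ?thesis using i by (intro exI[of _ i]) auto
  next
    case False
    then show ?thesis by (intro exI[of _ "Suc r"]) auto
  qed
qed (use assms in auto)

lemma tpow_sum_eq_partial_sum:
  fixes xi :: "nat \<Rightarrow> real"
  assumes "strict_mono xi" "i \<le> r" "xi i < t" "i < r \<Longrightarrow> t \<le> xi (Suc i)"
  shows "tpow_sum {..r} c xi p t = (\<Sum>j\<le>i. c j * (t - xi j) ^ p)"
proof -
  have "tpow_sum {..r} c xi p t = (\<Sum>j\<le>i. c j * tpow (t - xi j) p)"
    unfolding tpow_sum_def
  proof (rule sum.mono_neutral_right)
    show "\<forall>j\<in>{..r} - {..i}. c j * tpow (t - xi j) p = 0"
    proof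
      fix j assume "j \<in> {..r} - {..i}"
      then have "Suc i \<le> j" "i < r" by auto
      then have "t \<le> xi j" using assms(1,4) by (meson order.trans strict_mono_less_eq)
      then show "c j * tpow (t - xi j) p = 0" by (simp add: tpow_def)
    qed
  qed (use assms(2) in auto)
  also have "\<dots> = (\<Sum>j\<le>i. c j * (t - xi j) ^ p)"
  proof (rule sum.cong)
    fix j assume "j \<in> {..i}"
    then have "xi j < t" using assms(1,3) by (meson atMost_iff le_less_trans strict_mono_less_eq)
    then show "c j * tpow (t - xi j) p = c j * (t - xi j) ^ p" by (simp add: tpow_def)
  qed simp
  finally show ?thesis .
qed

lemma eq_tpow_sum_if_partial_sums:
  fixes xi :: "nat \<Rightarrow> real" and N :: "real \<Rightarrow> real"
  assumes xi: "strict_mono xi" and "isCont N (xi 0)" "\<forall>t<xi 0. N t = 0"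
    and partial: "\<And>i t. i \<le> r \<Longrightarrow> xi i < t \<Longrightarrow> (i < r \<Longrightarrow> t \<le> xi (Suc i))
      \<Longrightarrow> N t = (\<Sum>j\<le>i. c j * (t - xi j) ^ p)"
  shows "N = tpow_sum {..r} c xi p"
proof
  fix t
  show "N t = tpow_sum {..r} c xi p t"
  proof (cases "xi 0 < t")
    case True
    then obtain i where i: "i \<le> r" "xi i < t" "i < r \<longrightarrow> t \<le> xi (Suc i)"
      using strict_mono_interval_index by blast
    then show ?thesis using partial[of i t] tpow_sum_eq_partial_sum[OF xi] by simp
  next
    case False
    have "\<not> xi i < t" for i
      using False xi by (meson le0 not_less order.trans strict_mono_less_eq)
    then have "tpow_sum {..r} c xi p t = 0"
      by (simp add: tpow_sum_def tpow_def)
    moreover have "N t = 0"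
    proof (cases "t < xi 0")
      case False
      with \<open>\<not> xi 0 < t\<close> have "t = xi 0" by simp
      then show ?thesis
        using assms(2,3) by (intro isCont_eq_from_left[where a = "xi 0 - 1"]) auto
    qed (use assms(3) in simp)
    ultimately show ?thesis by simp
  qed
qed

text \<open>Piece i lives between the knots xi (i - 1) and xi i; pieces 0 and r + 1 are the zero
  polynomial outside the support.\<close>
lemma bspline_pieces:
  fixes xi :: "nat \<Rightarrow> real"
  assumes "0 < r" "is_bspline r xi N"
  obtains Q where "\<And>i. degree (Q i) < r" "Q 0 = 0" "Q (Suc r) = 0"
    "\<And>i t. i \<le> r \<Longrightarrow> xi i < t \<Longrightarrow> (i < r \<Longrightarrow> t \<le> xi (Suc i)) \<Longrightarrow> N t = poly (Q (Suc i)) t"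
    "\<And>i t. i \<le> r \<Longrightarrow> t < xi i \<Longrightarrow> (0 < i \<Longrightarrow> xi (i - 1) < t) \<Longrightarrow> N t = poly (Q i) t"
proof -
  have zero: "\<forall>x. x < xi 0 \<or> xi r < x \<longrightarrow> N x = 0" and "\<forall>i<r. poly_on r {xi i<..xi (Suc i)} N"
    using assms(2) by (auto simp: is_bspline_def)
  then obtain P where P: "\<And>i. i < r \<Longrightarrow> degree (P i) < r \<and> (\<forall>x\<in>{xi i<..xi (Suc i)}. N x = poly (P i) x)"
    unfolding poly_on_def by metis
  define Q where "Q i = (if 0 < i \<and> i \<le> r then P (i - 1) else 0)" for i
  have right: "N t = poly (Q (Suc i)) t" if "i \<le> r" "xi i < t" "i < r \<Longrightarrow> t \<le> xi (Suc i)" for i t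
    using that P[of i] zero by (cases "i < r") (auto simp: Q_def)
  show ?thesis
  proof
    show "degree (Q i) < r" for i
      using P[of "i - 1"] assms(1) by (auto simp: Q_def)
    show "N t = poly (Q i) t" if "i \<le> r" "t < xi i" "0 < i \<Longrightarrow> xi (i - 1) < t" for i t
    proof (cases i)
      case 0
      then show ?thesis using that zero by (simp add: Q_def)
    next
      case (Suc j)
      then show ?thesis using that right[of j t] by simp
    qed
  qed (use right in \<open>auto simp: Q_def\<close>)
qed

lemma bspline_eq_tpow_sum:
  fixes xi :: "nat \<Rightarrow> real" and N :: "real \<Rightarrow> real"
  assumes r: "r \<ge> 2" and xi: "strict_mono xi" and N: "is_bspline r xi N"
  shows "\<exists>c. N = tpow_sum {..r} c xi (r - 1) \<and> (\<Sum>i\<le>r. smult (c i) ([:-xi i, 1:] ^ (r - 1))) = 0"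
proof -
  obtain Q where degQ: "\<And>i. degree (Q i) < r" and Q0: "Q 0 = 0" "Q (Suc r) = 0"
    and right: "\<And>i t. i \<le> r \<Longrightarrow> xi i < t \<Longrightarrow> (i < r \<Longrightarrow> t \<le> xi (Suc i)) \<Longrightarrow> N t = poly (Q (Suc i)) t"
    and left: "\<And>i t. i \<le> r \<Longrightarrow> t < xi i \<Longrightarrow> (0 < i \<Longrightarrow> xi (i - 1) < t) \<Longrightarrow> N t = poly (Q i) t"
    using bspline_pieces[OF _ N] r by auto
  have Ck: "C_k (r - 2) N" using N by (simp add: is_bspline_def)
  have r1: "r - 1 = Suc (r - 2)" using r by simp
  have "\<exists>c. Q (Suc i) - Q i = smult c ([:-xi i, 1:] ^ (r - 1))" if i: "i \<le> r" for i
    unfolding r1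
  proof (rule C_k_knot_jump_linear_power[OF Ck])
    define a where "a = (if i = 0 then xi 0 - 1 else xi (i - 1))"
    define b where "b = (if i < r then xi (Suc i) else xi r + 1)"
    show "a < xi i" "xi i < b" using xi i by (auto simp: a_def b_def strict_mono_less)
    show "\<forall>t\<in>{a<..<xi i}. N t = poly (Q i) t" using i by (auto simp: a_def intro: left)
    show "\<forall>t\<in>{xi i<..<b}. N t = poly (Q (Suc i)) t" using i by (auto simp: b_def intro: right)
    show "degree (Q (Suc i) - Q i) \<le> Suc (r - 2)"
      using degQ[of i] degQ[of "Suc i"] r1 by (intro degree_diff_le) linarith+
  qed
  then obtain c where c: "\<And>i. i \<le> r \<Longrightarrow> Q (Suc i) - Q i = smult (c i) ([:-xi i, 1:] ^ (r - 1))"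
    by metis
  have Q_sum: "Q i = (\<Sum>j<i. smult (c j) ([:-xi j, 1:] ^ (r - 1)))" if "i \<le> Suc r" for i
    using that
  proof (induction i)
    case (Suc i)
    then show ?case using c[of i] by (simp add: algebra_simps)
  qed (simp add: Q0)
  have "N = tpow_sum {..r} c xi (r - 1)"
  proof (rule eq_tpow_sum_if_partial_sums[OF xi])
    show "isCont N (xi 0)" using C_k_isCont[OF Ck, of 0] by simp
    show "\<forall>t<xi 0. N t = 0" using left[of 0] Q0 by simp
    show "N t = (\<Sum>j\<le>i. c j * (t - xi j) ^ (r - 1))"
      if "i \<le> r" "xi i < t" "i < r \<Longrightarrow> t \<le> xi (Suc i)" for i t
      using that right[of i t] Q_sum[of "Suc i"] by (simp add: poly_sum poly_power lessThan_Suc_atMost)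
  qed
  moreover have "(\<Sum>i\<le>r. smult (c i) ([:-xi i, 1:] ^ (r - 1))) = 0"
    using Q_sum[of "Suc r"] Q0 by (simp add: lessThan_Suc_atMost)
  ultimately show ?thesis by blast
qed

text \<open>Dropping any one knot leaves r distinct knots whose (r - 1)-st powers are linearly
  independent, so a vanishing coefficient would force all of them, and hence N, to vanish.\<close>
lemma bspline_eq_tpow_sum_nonzero:
  fixes xi :: "nat \<Rightarrow> real" and N :: "real \<Rightarrow> real"
  assumes "r \<ge> 2" "strict_mono xi" "is_bspline r xi N"
  obtains c where "N = tpow_sum {..r} c xi (r - 1)" "\<And>i. i \<le> r \<Longrightarrow> c i \<noteq> 0"
proof -
  obtain c where N: "N = tpow_sum {..r} c xi (r - 1)"
    and c: "(\<Sum>i\<le>r. smult (c i) ([:-xi i, 1:] ^ (r - 1))) = 0"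
    using bspline_eq_tpow_sum[OF assms] by blast
  have "c l \<noteq> 0" if l: "l \<le> r" for l
  proof
    assume cl: "c l = 0"
    then have "(\<Sum>i\<in>{..r} - {l}. smult (c i) ([:-xi i, 1:] ^ (r - 1))) = 0"
      using c l by (simp add: sum.remove)
    then have "\<forall>i\<in>{..r} - {l}. c i = 0"
      using l assms(2) strict_mono_imp_inj_on
      by (intro linear_powers_independent[where p = "r - 1"]) (auto simp: inj_on_subset)
    with cl have "\<forall>i\<le>r. c i = 0" by auto
    then have "\<forall>t. N t = 0" by (simp add: N tpow_sum_def)
    then show False using assms(3) by (simp add: is_bspline_def)
  qed
  with N that show ?thesis by blast
qed

section \<open>Truncated-power series\<close>

definition lagrange_basis :: "real set \<Rightarrow> real \<Rightarrow> real poly" where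
  "lagrange_basis X x = smult (1 / (\<Prod>y\<in>X - {x}. x - y)) (\<Prod>y\<in>X - {x}. [:-y, 1:])"

lemma poly_lagrange_basis:
  assumes "finite X" "x \<in> X" "y \<in> X"
  shows "poly (lagrange_basis X x) y = (if y = x then 1 else 0)"
  using assms by (auto simp: lagrange_basis_def poly_prod)

lemma degree_lagrange_basis:
  assumes "finite X" "x \<in> X"
  shows "degree (lagrange_basis X x) < card X"
proof -
  have "degree (\<Prod>y\<in>X - {x}. [:-y, 1:]) \<le> (\<Sum>y\<in>X - {x}. degree [:-y, 1 :: real:])"
    using degree_prod_sum_le[of "X - {x}" "\<lambda>y. [:-y, 1:]"] assms(1) by (simp add: o_def)
  also have "\<dots> < card X"
    using assms card_gt_0_iff[of X] by (auto simp: card_Diff_singleton)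
  finally show ?thesis
    unfolding lagrange_basis_def using degree_smult_le le_less_trans by blast
qed

lemma lagrange_interpolation:
  assumes "finite X" "degree P < card X"
  shows "P = (\<Sum>x\<in>X. smult (poly P x) (lagrange_basis X x))"
proof (rule poly_eqI_degree[of X])
  show "poly P y = poly (\<Sum>x\<in>X. smult (poly P x) (lagrange_basis X x)) y" if "y \<in> X" for y
    using assms(1) that by (simp add: poly_sum poly_lagrange_basis if_distrib cong: if_cong)
  show "degree (\<Sum>x\<in>X. smult (poly P x) (lagrange_basis X x)) < card X"
    using assms(2) degree_lagrange_basis[OF assms(1)]
    by (intro degree_sum_less) (auto intro: le_less_trans[OF degree_smult_le])
qed (use assms in auto)

lemma poly_on_tendsto:
  fixes P :: "'a \<Rightarrow> real poly"
  assumes "F \<noteq> bot" "infinite S" "\<forall>\<^sub>F n in F. degree (P n) < m"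
    "\<And>t. t \<in> S \<Longrightarrow> ((\<lambda>n. poly (P n) t) \<longlongrightarrow> g t) F"
  shows "poly_on m S g"
proof -
  obtain X where X: "finite X" "card X = m" "X \<subseteq> S"
    using infinite_arbitrarily_large[OF assms(2)] by blast
  have "0 < m" using eventually_happens'[OF assms(1,3)] by auto
  define Q where "Q = (\<Sum>x\<in>X. smult (g x) (lagrange_basis X x))"
  have "degree Q < m"
    unfolding Q_def using X \<open>0 < m\<close> degree_lagrange_basis[OF X(1)]
    by (intro degree_sum_less) (auto intro: le_less_trans[OF degree_smult_le])
  moreover have "g t = poly Q t" if t: "t \<in> S" for t
  proof (rule tendsto_unique[OF assms(1) assms(4)[OF t]])
    have "((\<lambda>n. \<Sum>x\<in>X. poly (P n) x * poly (lagrange_basis X x) t) \<longlongrightarrow> poly Q t) F"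
      unfolding Q_def poly_sum using X assms(4) by (auto intro!: tendsto_sum tendsto_mult_right)
    moreover have "\<forall>\<^sub>F n in F. (\<Sum>x\<in>X. poly (P n) x * poly (lagrange_basis X x) t) = poly (P n) t"
    proof (rule eventually_mono[OF assms(3)])
      fix n assume "degree (P n) < m"
      then have "P n = (\<Sum>x\<in>X. smult (poly (P n) x) (lagrange_basis X x))"
        using X by (intro lagrange_interpolation) auto
      then show "(\<Sum>x\<in>X. poly (P n) x * poly (lagrange_basis X x) t) = poly (P n) t"
        by (metis (no_types, lifting) poly_smult poly_sum sum.cong)
    qed
    ultimately show "((\<lambda>n. poly (P n) t) \<longlongrightarrow> poly Q t) F"
      by (rule Lim_transform_eventually)
  qed
  ultimately show ?thesis unfolding poly_on_def by blast
qed

text \<open>Near the knot T K all other truncated powers of a truncated-power series are polynomials,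
  so the series minus its K-th term is a pointwise limit of polynomials of degree below m.\<close>
lemma tpow_series_poly_on_near_knot:
  fixes T a :: "int \<Rightarrow> real" and s :: "real \<Rightarrow> real"
  assumes T: "strict_mono T" and "m \<ge> 1"
    and s: "\<And>t. ((\<lambda>i. a i * tpow (t - T i) (m - 1)) has_sum s t) UNIV"
  shows "poly_on m {T (K - 1)<..<T (K + 1)} (\<lambda>t. s t - a K * tpow (t - T K) (m - 1))"
proof (rule poly_on_tendsto)
  define I where "I = UNIV - {K}"
  define B where "B i = (if i < K then [:-T i, 1:] ^ (m - 1) else 0)" for i
  show "finite_subsets_at_top I \<noteq> bot" by simp
  show "\<forall>\<^sub>F F in finite_subsets_at_top I. degree (\<Sum>i\<in>F. smult (a i) (B i)) < m"
    using \<open>m \<ge> 1\<close> by (intro always_eventually allI degree_sum_less)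
      (auto simp: B_def degree_linear_power intro: le_less_trans[OF degree_smult_le])
  fix t assume t: "t \<in> {T (K - 1)<..<T (K + 1)}"
  have "a i * tpow (t - T i) (m - 1) = poly (smult (a i) (B i)) t" if "i \<in> I" for i
  proof (cases "i < K")
    case True
    then have "T i \<le> T (K - 1)" using T by (simp add: strict_mono_less_eq)
    then show ?thesis using True t by (simp add: B_def tpow_def poly_power)
  next
    case False
    then have "T (K + 1) \<le> T i" using that T by (simp add: I_def strict_mono_less_eq)
    then show ?thesis using False t by (simp add: B_def tpow_def)
  qed
  moreover have "((\<lambda>i. a i * tpow (t - T i) (m - 1)) has_sum (s t - a K * tpow (t - T K) (m - 1))) I"
  proof -
    have "((\<lambda>i. a i * tpow (t - T i) (m - 1)) has_sum a K * tpow (t - T K) (m - 1)) {K}"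
      using has_sum_finite[of "{K}" "\<lambda>i. a i * tpow (t - T i) (m - 1)"] by simp
    from has_sum_Diff[OF s this] show ?thesis by (simp add: I_def)
  qed
  ultimately have "((\<lambda>i. poly (smult (a i) (B i)) t) has_sum (s t - a K * tpow (t - T K) (m - 1))) I"
    using has_sum_cong by (metis (no_types, lifting))
  then show "((\<lambda>F. poly (\<Sum>i\<in>F. smult (a i) (B i)) t) \<longlongrightarrow> s t - a K * tpow (t - T K) (m - 1))
      (finite_subsets_at_top I)"
    by (simp add: has_sum_def poly_sum)
qed (use T in \<open>simp add: strict_mono_less\<close>)

section \<open>The wavelets\<close>

lemma strict_mono_Xi: "strict_mono T1 \<Longrightarrow> strict_mono (Xi m mt T1 k)"
  unfolding strict_mono_Suc_iff by (auto simp: Xi_def Let_def strict_mono_less)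

lemma Xi_middle: "Xi m mt T1 k ((m + mt) div 2) = T1 (2 * k + 1)"
  by (simp add: Xi_def)

lemma Xi_even:
  assumes "j \<noteq> (m + mt) div 2"
  shows "Xi m mt T1 k j \<in> range (\<lambda>i. T1 (2 * i))"
proof -
  define l where "l = int ((m + mt) div 2)"
  have "Xi m mt T1 k j = T1 (2 * (if int j < l then k + 1 - l + int j else k + int j - l))"
    using assms by (simp add: Xi_def Let_def l_def)
  then show ?thesis by (metis rangeI)
qed

lemma wavelet_split:
  fixes T1 :: "int \<Rightarrow> real" and N psi :: "real \<Rightarrow> real"
  assumes m: "m \<ge> 2" and T1: "strict_mono T1" and "alpha \<noteq> 0"
    and N: "is_bspline (m + mt) (Xi m mt T1 k) N"
    and psi: "\<And>t. psi t = alpha * (deriv ^^ mt) N t"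
  obtains \<sigma> \<gamma> where "\<sigma> \<in> spline_space m (\<lambda>i. T1 (2 * i))" "\<gamma> \<noteq> 0"
    "\<And>t. psi t = \<sigma> t + \<gamma> * tpow (t - T1 (2 * k + 1)) (m - 1)"
proof -
  define r where "r = m + mt"
  define l where "l = (m + mt) div 2"
  define xi where "xi = Xi m mt T1 k"
  obtain c where Nc: "N = tpow_sum {..r} c xi (r - 1)" and c: "\<And>i. i \<le> r \<Longrightarrow> c i \<noteq> 0"
    using bspline_eq_tpow_sum_nonzero[of r xi N] strict_mono_Xi[OF T1] m N by (auto simp: r_def xi_def)
  define e where "e i = alpha * (fact (r - 1) / fact (m - 1) * c i)" for i
  have "psi t = tpow_sum {..r} e xi (m - 1) t" for t
  proof -
    have "r - 1 - mt = m - 1" using m by (simp add: r_def)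
    then have "(deriv ^^ mt) N = tpow_sum {..r} (\<lambda>i. fact (r - 1) / fact (m - 1) * c i) xi (m - 1)"
      unfolding Nc using m by (subst higher_deriv_tpow_sum) (auto simp: r_def)
    then show ?thesis by (simp add: psi tpow_sum_def e_def sum_distrib_left mult.assoc)
  qed
  moreover have "l \<le> r" "xi l = T1 (2 * k + 1)" by (simp_all add: l_def r_def xi_def Xi_middle)
  ultimately have "psi t = tpow_sum ({..r} - {l}) e xi (m - 1) t + e l * tpow (t - T1 (2 * k + 1)) (m - 1)"
    for t by (simp add: tpow_sum_def sum.remove)
  moreover have "tpow_sum ({..r} - {l}) e xi (m - 1) \<in> spline_space m (\<lambda>i. T1 (2 * i))"
    using m T1 Xi_even[of _ m mt T1 k] by (intro tpow_sum_in_spline_space)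
      (auto simp: strict_mono_def l_def xi_def)
  moreover have "e l \<noteq> 0" using c[OF \<open>l \<le> r\<close>] \<open>alpha \<noteq> 0\<close> by (simp add: e_def)
  ultimately show ?thesis using that by blast
qed

lemma jump_coeff_wavelet_split:
  fixes T1 :: "int \<Rightarrow> real"
  assumes "strict_mono T1" "\<sigma> \<in> spline_space m (\<lambda>i. T1 (2 * i))"
    "\<And>t. f t = \<sigma> t + \<gamma> * tpow (t - T1 (2 * k + 1)) (m - 1)"
  shows "jump_coeff m f (T1 (2 * k + 1)) = \<gamma>"
proof (rule jump_coeff_eqI)
  show "T1 (2 * k) < T1 (2 * k + 1)" "T1 (2 * k + 1) < T1 (2 * (k + 1))"
    using assms(1) by (simp_all add: strict_mono_less)
  have "poly_on m {T1 (2 * k)<..T1 (2 * (k + 1))} \<sigma>"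
    using assms(2) by (simp add: spline_space_def)
  then show "poly_on m {T1 (2 * k)<..<T1 (2 * (k + 1))} (\<lambda>t. f t - \<gamma> * tpow (t - T1 (2 * k + 1)) (m - 1))"
    by (auto simp: assms(3) intro: poly_on_subset)
qed

lemma poly_on_coarse_interval_off_knot:
  fixes T1 :: "int \<Rightarrow> real"
  assumes T1: "strict_mono T1" and "m \<ge> 1" and "j \<noteq> k"
    and \<sigma>: "\<sigma> \<in> spline_space m (\<lambda>i. T1 (2 * i))"
    and f: "\<And>t. f t = \<sigma> t + \<gamma> * tpow (t - T1 (2 * j + 1)) (m - 1)"
  shows "poly_on m {T1 (2 * k)<..T1 (2 * (k + 1))} f"
proof -
  define J where "J = {T1 (2 * k)<..T1 (2 * (k + 1))}"
  have "J \<subseteq> {..T1 (2 * j + 1)} \<or> J \<subseteq> {T1 (2 * j + 1)<..}"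
  proof (cases "j < k")
    case True
    then have "T1 (2 * j + 1) \<le> T1 (2 * k)" using T1 by (simp add: strict_mono_less_eq)
    then show ?thesis by (auto simp: J_def)
  next
    case False
    with \<open>j \<noteq> k\<close> have "T1 (2 * (k + 1)) \<le> T1 (2 * j + 1)" using T1 by (simp add: strict_mono_less_eq)
    then show ?thesis by (auto simp: J_def)
  qed
  then have "poly_on m J (\<lambda>t. tpow (t - T1 (2 * j + 1)) (m - 1))"
    using poly_on_tpow[of J _ "m - 1"] \<open>m \<ge> 1\<close> by simp
  moreover have "poly_on m J \<sigma>" using \<sigma> by (simp add: spline_space_def J_def)
  ultimately show ?thesis
    unfolding J_def[symmetric] f by (intro poly_on_add poly_on_cmult)
qed

text \<open>On the coarse interval around T1 (2 k + 1), the coarse spline s0, sigma k and every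
  wavelet other than the k-th are polynomials, so only d k * gamma k survives as a jump there.\<close>
lemma jump_coeff_wavelet_combination:
  fixes T1 :: "int \<Rightarrow> real"
  assumes T1: "strict_mono T1" and "m \<ge> 1"
    and s0: "s0 \<in> spline_space m (\<lambda>i. T1 (2 * i))" and "finite {j. d j \<noteq> 0}"
    and \<sigma>: "\<And>j. \<sigma> j \<in> spline_space m (\<lambda>i. T1 (2 * i))"
    and psi: "\<And>j t. psi j t = \<sigma> j t + \<gamma> j * tpow (t - T1 (2 * j + 1)) (m - 1)"
    and s1: "\<And>t. s1 t = s0 t + (\<Sum>j\<in>{j. d j \<noteq> 0}. d j * psi j t)"
  shows "jump_coeff m s1 (T1 (2 * k + 1)) = d k * \<gamma> k"
proof (rule jump_coeff_eqI)
  define J where "J = {T1 (2 * k)<..T1 (2 * (k + 1))}"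
  define \<rho> where "\<rho> j = (if j = k then \<sigma> k else psi j)" for j
  have "poly_on m J (\<rho> j)" for j
    using poly_on_coarse_interval_off_knot[OF T1 \<open>m \<ge> 1\<close> _ \<sigma> psi, of j k] \<sigma>[of k]
    by (simp add: \<rho>_def J_def spline_space_def)
  then have "poly_on m J (\<lambda>t. s0 t + (\<Sum>j\<in>{j. d j \<noteq> 0}. d j * \<rho> j t))"
    using s0 \<open>m \<ge> 1\<close> by (intro poly_on_add poly_on_sum poly_on_cmult) (auto simp: spline_space_def J_def)
  moreover have "s0 t + (\<Sum>j\<in>{j. d j \<noteq> 0}. d j * \<rho> j t) = s1 t - d k * \<gamma> k * tpow (t - T1 (2 * k + 1)) (m - 1)" for t
  proof -
    have "d j * \<rho> j t = d j * psi j t - (if j = k then d k * \<gamma> k * tpow (t - T1 (2 * k + 1)) (m - 1) else 0)" for j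
      by (simp add: \<rho>_def psi algebra_simps)
    then show ?thesis
      using \<open>finite {j. d j \<noteq> 0}\<close> by (simp add: s1 sum_subtractf)
  qed
  ultimately show "poly_on m {T1 (2 * k)<..<T1 (2 * k + 2)} (\<lambda>t. s1 t - d k * \<gamma> k * tpow (t - T1 (2 * k + 1)) (m - 1))"
    by (auto simp: J_def intro: poly_on_subset)
  show "T1 (2 * k) < T1 (2 * k + 1)" "T1 (2 * k + 1) < T1 (2 * k + 2)"
    using T1 by (simp_all add: strict_mono_less)
qed

theorem mainTheorem2:
  fixes m mt :: nat and T1 :: "int \<Rightarrow> real" and alpha :: "int \<Rightarrow> real"
    and N psi :: "int \<Rightarrow> real \<Rightarrow> real"
  assumes "m \<ge> 2" and "mt \<ge> 1" and "strict_mono T1"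
    and "\<forall>k. alpha k \<noteq> 0"
    and "\<forall>k. is_bspline (m + mt) (Xi m mt T1 k) (N k)"
    and "\<forall>k t. psi k t = alpha k * (deriv ^^ mt) (N k) t"
  shows "(\<forall>k. jump_coeff m (psi k) (T1 (2 * k + 1)) \<noteq> 0 \<and>
            (\<exists>\<sigma> \<in> spline_space m (\<lambda>i. T1 (2 * i)).
               \<forall>t. psi k t = \<sigma> t + jump_coeff m (psi k) (T1 (2 * k + 1)) * tpow (t - T1 (2 * k + 1)) (m - 1)))
       \<and> (\<forall>s1 s0 d a.
            s1 \<in> spline_space m T1 \<and> bounded {t. s1 t \<noteq> 0}
            \<and> s0 \<in> spline_space m (\<lambda>i. T1 (2 * i))
            \<and> finite {k. d k \<noteq> 0}
            \<and> (\<forall>t. s1 t = s0 t + (\<Sum>k\<in>{k. d k \<noteq> 0}. d k * psi k t))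
            \<and> (\<forall>t. ((\<lambda>i. a i * tpow (t - T1 i) (m - 1)) has_sum s1 t) UNIV)
            \<longrightarrow> (\<forall>k. d k = a (2 * k + 1) / jump_coeff m (psi k) (T1 (2 * k + 1))
                    \<and> a (2 * k + 1) = jump_coeff m s1 (T1 (2 * k + 1))))"
proof -
  note m = \<open>m \<ge> 2\<close> and T1 = \<open>strict_mono T1\<close>
  have "\<exists>\<sigma> \<gamma>. \<sigma> \<in> spline_space m (\<lambda>i. T1 (2 * i)) \<and> \<gamma> \<noteq> 0 \<and>
      (\<forall>t. psi k t = \<sigma> t + \<gamma> * tpow (t - T1 (2 * k + 1)) (m - 1))" for k
    using wavelet_split[OF m T1, of "alpha k" mt k "N k" "psi k"] assms(4-6) by metis
  then obtain \<sigma> \<gamma> where \<sigma>: "\<And>k. \<sigma> k \<in> spline_space m (\<lambda>i. T1 (2 * i))" and "\<And>k. \<gamma> k \<noteq> 0"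
    and psi: "\<And>k t. psi k t = \<sigma> k t + \<gamma> k * tpow (t - T1 (2 * k + 1)) (m - 1)"
    by metis
  have \<gamma>: "jump_coeff m (psi k) (T1 (2 * k + 1)) = \<gamma> k" for k
    using jump_coeff_wavelet_split[OF T1 \<sigma> psi] .
  show ?thesis
  proof (intro conjI allI impI; (elim conjE)?)
    show "jump_coeff m (psi k) (T1 (2 * k + 1)) \<noteq> 0" for k
      using \<gamma> \<open>\<gamma> k \<noteq> 0\<close> by simp
    show "\<exists>\<sigma> \<in> spline_space m (\<lambda>i. T1 (2 * i)).
        \<forall>t. psi k t = \<sigma> t + jump_coeff m (psi k) (T1 (2 * k + 1)) * tpow (t - T1 (2 * k + 1)) (m - 1)" for k
      using \<sigma> psi unfolding \<gamma> by blast
    fix s1 s0 d a k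
    assume s0: "s0 \<in> spline_space m (\<lambda>i. T1 (2 * i))" and fin: "finite {k. d k \<noteq> 0}"
      and s1: "\<forall>t. s1 t = s0 t + (\<Sum>k\<in>{k. d k \<noteq> 0}. d k * psi k t)"
      and a: "\<forall>t. ((\<lambda>i. a i * tpow (t - T1 i) (m - 1)) has_sum s1 t) UNIV"
    have "jump_coeff m s1 (T1 (2 * k + 1)) = a (2 * k + 1)"
      using tpow_series_poly_on_near_knot[OF T1 _ a[rule_format], of "2 * k + 1"] m T1
      by (intro jump_coeff_eqI) (auto simp: strict_mono_less)
    moreover have "jump_coeff m s1 (T1 (2 * k + 1)) = d k * \<gamma> k"
      using m by (intro jump_coeff_wavelet_combination[OF T1 _ s0 fin \<sigma> psi s1[rule_format]]) auto
    ultimately show "d k = a (2 * k + 1) / jump_coeff m (psi k) (T1 (2 * k + 1))"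
      and "a (2 * k + 1) = jump_coeff m s1 (T1 (2 * k + 1))"
      using \<gamma> \<open>\<gamma> k \<noteq> 0\<close> by (auto simp: eq_divide_eq)
  qed
qed

end
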